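(* Let $\phi_\alpha$ be either $\|\cdot\|_1$ or $(p-1)^{1/p}\|\cdot\|_p$ with $p\ge2$, and let $\theta^*$ be a KKT point of $\min_\theta\frac12\phi_\alpha^2(\theta)$ s.t. $y_if(\theta,x_i)\ge1$ for all $i\in[K]$. Then there exist $h_i\in\partial^\circ_\theta f(\theta^*,x_i)$, $i\in[K]$, such that $\frac1L\theta^*$ is an optimal solution of $$\min_{\theta\in\mathbb R^n}\tfrac12\phi_\alpha^2(\theta)\quad\text{s.t.}\quad y_i\langle\theta,h_i\rangle_2\ge1\ \ \forall i\in[K].$$
   Context: $f(\theta,x)$ is locally Lipschitz in $\theta$ and $L$-homogeneous ($f(c\theta,x)=c^Lf(\theta,x)$, $c>0$), so Euler's identity $\langle\theta,h\rangle=Lf(\theta,x)$ holds for all $h\in\partial^\circ_\theta f(\theta,x)$. $q_i(\theta)=y_if(\theta,x_i)$. KKT point: feasible $\theta$ with $\lambda_i\ge0$ and $h_i'\in\partial^\circ q_i(\theta)$ such that $0\in\partial^\circ\frac12\phi_\alpha^2(\theta)-\sum_i\lambda_ih_i'$ and $\lambda_i(q_i(\theta)-1)=0$ for all $i$. *)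

theory Defs
  imports "HOL-Analysis.Analysis"
begin

definition clarke_subdiff :: "(real ^ 'n \<Rightarrow> real) \<Rightarrow> real ^ 'n \<Rightarrow> (real ^ 'n) set" where
  "clarke_subdiff g \<theta> = convex hull
     {v. \<exists>s G. s \<longlonglongrightarrow> \<theta> \<and>
              (\<forall>k. (g has_derivative (\<lambda>d. G k \<bullet> d)) (at (s k))) \<and>
              G \<longlonglongrightarrow> v}"

definition locally_lipschitz :: "(real ^ 'n \<Rightarrow> real) \<Rightarrow> bool" where
  "locally_lipschitz g \<longleftrightarrow>
     (\<forall>z. \<exists>r>0. \<exists>C. \<forall>u\<in>ball z r. \<forall>w\<in>ball z r. \<bar>g u - g w\<bar> \<le> C * dist u w)"

definition l1norm :: "real ^ 'n \<Rightarrow> real" where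
  "l1norm \<theta> = (\<Sum>j\<in>UNIV. \<bar>\<theta> $ j\<bar>)"

definition lpnorm :: "real \<Rightarrow> real ^ 'n \<Rightarrow> real" where
  "lpnorm p \<theta> = (\<Sum>j\<in>UNIV. \<bar>\<theta> $ j\<bar> powr p) powr (1 / p)"

definition kkt_point ::
  "(real ^ 'n \<Rightarrow> real) \<Rightarrow> (real ^ 'n \<Rightarrow> 'x \<Rightarrow> real) \<Rightarrow> nat \<Rightarrow> (nat \<Rightarrow> 'x) \<Rightarrow> (nat \<Rightarrow> real)
     \<Rightarrow> real ^ 'n \<Rightarrow> bool" where
  "kkt_point \<phi> f K x y \<theta> \<longleftrightarrow>
     (\<forall>i<K. y i * f \<theta> (x i) \<ge> 1) \<and>
     (\<exists>lam h'. (\<forall>i<K. lam i \<ge> 0) \<and>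
        (\<forall>i<K. h' i \<in> clarke_subdiff (\<lambda>t. y i * f t (x i)) \<theta>) \<and>
        0 \<in> (\<lambda>g. g - (\<Sum>i<K. lam i *\<^sub>R h' i)) ` clarke_subdiff (\<lambda>t. (1/2) * (\<phi> t)\<^sup>2) \<theta> \<and>
        (\<forall>i<K. lam i * (y i * f \<theta> (x i) - 1) = 0))"

end

theory Submission
  imports Defs
begin

(* Euler's identity <v, theta> = L f(theta) holds at points of differentiability of an
   L-homogeneous function and survives limits and convex hulls, so it holds for all Clarke
   subgradients. Hence the KKT multipliers of theta* certify the KKT conditions of the
   linearized problem  min F(theta)  s.t.  y_i <theta, h_i> >= L, where F = phi^2/2.
   Since F is convex (Minkowski's inequality for the lp norm), its Clarke subgradients are
   ordinary subgradients and these conditions are sufficient: theta* solves the linearized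
   problem with right-hand side L. As F is 2-homogeneous, theta*/L solves it with
   right-hand side 1. *)

lemma locally_lipschitz_imp_isCont:
  assumes "locally_lipschitz g"
  shows "isCont g z"
proof -
  obtain r C where r: "r > 0" and C: "\<forall>u\<in>ball z r. \<forall>w\<in>ball z r. \<bar>g u - g w\<bar> \<le> C * dist u w"
    using assms unfolding locally_lipschitz_def by blast
  have "(max C 0)-lipschitz_on (ball z r) g"
  proof (rule lipschitz_onI)
    fix u w assume "u \<in> ball z r" "w \<in> ball z r"
    then have "\<bar>g u - g w\<bar> \<le> C * dist u w" using C by blast
    also have "\<dots> \<le> max C 0 * dist u w" by (intro mult_right_mono) auto
    finally show "dist (g u) (g w) \<le> max C 0 * dist u w" by (simp add: dist_real_def)
  qed simp
  then have "continuous_on (ball z r) g" by (rule lipschitz_on_continuous_on)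
  then show ?thesis using r by (simp add: continuous_on_eq_continuous_at)
qed

lemma clarke_subdiff_subset:
  assumes "convex S"
    and "\<And>s G v. s \<longlonglongrightarrow> \<theta> \<Longrightarrow> (\<And>k. (g has_derivative (\<lambda>d. G k \<bullet> d)) (at (s k)))
                 \<Longrightarrow> G \<longlonglongrightarrow> v \<Longrightarrow> v \<in> S"
  shows "clarke_subdiff g \<theta> \<subseteq> S"
  unfolding clarke_subdiff_def using assms by (intro hull_minimal) auto

lemma clarke_subdiff_cmult_subset:
  fixes g :: "real ^ 'n \<Rightarrow> real"
  assumes c: "c \<noteq> 0"
  shows "clarke_subdiff (\<lambda>t. c * g t) \<theta> \<subseteq> (\<lambda>w. c *\<^sub>R w) ` clarke_subdiff g \<theta>"
proof (rule clarke_subdiff_subset)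
  show "convex ((\<lambda>w. c *\<^sub>R w) ` clarke_subdiff g \<theta>)"
    unfolding clarke_subdiff_def by (intro convex_scaling convex_convex_hull)
next
  fix s G v
  assume s: "s \<longlonglongrightarrow> \<theta>" and G: "G \<longlonglongrightarrow> v"
    and D: "\<And>k. ((\<lambda>t. c * g t) has_derivative (\<lambda>d. G k \<bullet> d)) (at (s k))"
  have D': "(g has_derivative (\<lambda>d. ((1/c) *\<^sub>R G k) \<bullet> d)) (at (s k))" for k
  proof -
    have "((\<lambda>t. (1/c) * (c * g t)) has_derivative (\<lambda>d. (1/c) * (G k \<bullet> d))) (at (s k))"
      by (intro has_derivative_mult_right D)
    then show ?thesis using c by simp
  qed
  have G': "(\<lambda>k. (1/c) *\<^sub>R G k) \<longlonglongrightarrow> (1/c) *\<^sub>R v" by (intro tendsto_intros G)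
  have "(1/c) *\<^sub>R v \<in> clarke_subdiff g \<theta>"
    unfolding clarke_subdiff_def
    by (intro hull_inc CollectI exI[of _ s] exI[of _ "\<lambda>k. (1/c) *\<^sub>R G k"] conjI allI s D' G')
  moreover have "v = c *\<^sub>R ((1/c) *\<^sub>R v)" using c by simp
  ultimately show "v \<in> (\<lambda>w. c *\<^sub>R w) ` clarke_subdiff g \<theta>" by blast
qed

lemma has_derivative_homogeneous_euler:
  fixes g :: "real ^ 'n \<Rightarrow> real"
  assumes hom: "\<And>c \<theta>. c > 0 \<Longrightarrow> g (c *\<^sub>R \<theta>) = c powr L * g \<theta>"
    and der: "(g has_derivative (\<lambda>d. G \<bullet> d)) (at s)"
  shows "G \<bullet> s = L * g s"
proof -
  have "((\<lambda>c. c *\<^sub>R s) has_derivative (\<lambda>t. t *\<^sub>R s)) (at 1)"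
    by (auto intro!: derivative_eq_intros)
  moreover have "(g has_derivative (\<lambda>d. G \<bullet> d)) (at (1 *\<^sub>R s))"
    using der by simp
  ultimately have "((\<lambda>c. g (c *\<^sub>R s)) has_derivative (\<lambda>t. G \<bullet> (t *\<^sub>R s))) (at 1)"
    by (rule has_derivative_compose)
  then have "((\<lambda>c. g (c *\<^sub>R s)) has_field_derivative (G \<bullet> s)) (at 1)"
    by (simp add: has_field_derivative_def mult_commute_abs)
  then have ray: "((\<lambda>c. c powr L * g s) has_field_derivative (G \<bullet> s)) (at 1)"
    by (rule has_field_derivative_transform_within_open[of _ _ _ "{0<..}"]) (auto simp: hom)
  have "((\<lambda>c. c powr L * g s) has_field_derivative (L * 1 powr (L - 1) * g s)) (at 1)"
    by (intro DERIV_cmult_right has_real_derivative_powr) simp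
  with ray show ?thesis using DERIV_unique by fastforce
qed

lemma clarke_subdiff_homogeneous_euler:
  fixes g :: "real ^ 'n \<Rightarrow> real"
  assumes cont: "\<And>w. isCont g w"
    and hom: "\<And>c \<theta>. c > 0 \<Longrightarrow> g (c *\<^sub>R \<theta>) = c powr L * g \<theta>"
    and v: "v \<in> clarke_subdiff g \<theta>"
  shows "v \<bullet> \<theta> = L * g \<theta>"
proof -
  have "clarke_subdiff g \<theta> \<subseteq> {v. \<theta> \<bullet> v = L * g \<theta>}"
  proof (rule clarke_subdiff_subset[OF convex_hyperplane])
    fix s G v
    assume s: "s \<longlonglongrightarrow> \<theta>" and G: "G \<longlonglongrightarrow> v"
      and D: "\<And>k. (g has_derivative (\<lambda>d. G k \<bullet> d)) (at (s k))"
    have "(\<lambda>k. G k \<bullet> s k) \<longlonglongrightarrow> v \<bullet> \<theta>" by (intro tendsto_intros s G)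
    moreover have "(\<lambda>k. L * g (s k)) \<longlonglongrightarrow> L * g \<theta>"
      by (intro tendsto_intros isCont_tendsto_compose[OF cont] s)
    moreover have "G k \<bullet> s k = L * g (s k)" for k
      by (rule has_derivative_homogeneous_euler[OF hom D])
    ultimately show "v \<in> {v. \<theta> \<bullet> v = L * g \<theta>}"
      using LIMSEQ_unique by (fastforce simp: inner_commute)
  qed
  then show ?thesis using v by (auto simp: inner_commute)
qed

lemma convex_on_has_derivative_subgradient:
  fixes F :: "real ^ 'n \<Rightarrow> real"
  assumes cvx: "convex_on UNIV F" and der: "(F has_derivative (\<lambda>d. G \<bullet> d)) (at s)"
  shows "F s + G \<bullet> (z - s) \<le> F z"
proof -
  define h where "h t = F (s + t *\<^sub>R (z - s))" for t :: real
  have h_convex: "convex_on UNIV h"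
  proof (rule convex_onI)
    fix t a b :: real assume t: "0 < t" "t < 1"
    have "s + ((1 - t) * a + t * b) *\<^sub>R (z - s)
        = (1 - t) *\<^sub>R (s + a *\<^sub>R (z - s)) + t *\<^sub>R (s + b *\<^sub>R (z - s))"
      by (simp add: algebra_simps)
    then show "h ((1 - t) *\<^sub>R a + t *\<^sub>R b) \<le> (1 - t) * h a + t * h b"
      using convex_onD[OF cvx, of t] t by (simp add: h_def)
  qed simp
  have "((\<lambda>t. s + t *\<^sub>R (z - s)) has_derivative (\<lambda>t. t *\<^sub>R (z - s))) (at 0)"
    by (auto intro!: derivative_eq_intros)
  moreover have "(F has_derivative (\<lambda>d. G \<bullet> d)) (at (s + 0 *\<^sub>R (z - s)))"
    using der by simp
  ultimately have "(h has_derivative (\<lambda>t. G \<bullet> (t *\<^sub>R (z - s)))) (at 0)"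
    unfolding h_def by (rule has_derivative_compose)
  then have "(h has_field_derivative (G \<bullet> (z - s))) (at 0)"
    by (simp add: has_field_derivative_def mult_commute_abs)
  then have "h 1 - h 0 \<ge> G \<bullet> (z - s) * (1 - 0)"
    by (intro convex_on_imp_above_tangent[OF h_convex]) auto
  then show ?thesis by (simp add: h_def)
qed

lemma convex_on_clarke_subgradient:
  fixes F :: "real ^ 'n \<Rightarrow> real"
  assumes cvx: "convex_on UNIV F" and v: "v \<in> clarke_subdiff F \<theta>"
  shows "F \<theta> + v \<bullet> (z - \<theta>) \<le> F z"
proof -
  have cont: "isCont F w" for w
    using convex_on_continuous[OF open_UNIV cvx] by (simp add: continuous_on_eq_continuous_at)
  have subgradients: "{v. \<forall>z. F \<theta> + v \<bullet> (z - \<theta>) \<le> F z} = (\<Inter>z. {v. (z - \<theta>) \<bullet> v \<le> F z - F \<theta>})"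
    by (auto simp: inner_commute algebra_simps)
  have "clarke_subdiff F \<theta> \<subseteq> {v. \<forall>z. F \<theta> + v \<bullet> (z - \<theta>) \<le> F z}"
  proof (rule clarke_subdiff_subset)
    show "convex {v. \<forall>z. F \<theta> + v \<bullet> (z - \<theta>) \<le> F z}"
      unfolding subgradients by (intro convex_INT convex_halfspace_le)
  next
    fix s G v
    assume s: "s \<longlonglongrightarrow> \<theta>" and G: "G \<longlonglongrightarrow> v"
      and D: "\<And>k. (F has_derivative (\<lambda>d. G k \<bullet> d)) (at (s k))"
    show "v \<in> {v. \<forall>z. F \<theta> + v \<bullet> (z - \<theta>) \<le> F z}"
    proof (intro CollectI allI)
      fix z
      have "(\<lambda>k. F (s k) + G k \<bullet> (z - s k)) \<longlonglongrightarrow> F \<theta> + v \<bullet> (z - \<theta>)"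
        by (intro tendsto_intros isCont_tendsto_compose[OF cont] s G)
      then show "F \<theta> + v \<bullet> (z - \<theta>) \<le> F z"
        using convex_on_has_derivative_subgradient[OF cvx D] by (intro LIMSEQ_le_const2) auto
    qed
  qed
  then show ?thesis using v by blast
qed

lemma convex_on_powr_nonneg:
  assumes p: "p \<ge> 1"
  shows "convex_on {0..} (\<lambda>x::real. x powr p)"
proof (rule convex_onI)
  have powr_le_self: "a powr p \<le> a" if "0 \<le> a" "a \<le> 1" for a :: real
    using powr_mono'[OF p that] that by (cases "a = 0") auto
  fix t x y :: real
  assume t: "0 < t" "t < 1" and xy: "x \<in> {0..}" "y \<in> {0..}"
  consider "x = 0" | "y = 0" | "x > 0" "y > 0" using xy by fastforce
  then show "((1 - t) *\<^sub>R x + t *\<^sub>R y) powr p \<le> (1 - t) * x powr p + t * y powr p"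
  proof cases
    case 1
    then have "((1 - t) *\<^sub>R x + t *\<^sub>R y) powr p = t powr p * y powr p"
      using t xy by (simp add: powr_mult)
    also have "\<dots> \<le> t * y powr p" using powr_le_self[of t] t by (intro mult_right_mono) auto
    finally show ?thesis using 1 p by simp
  next
    case 2
    then have "((1 - t) *\<^sub>R x + t *\<^sub>R y) powr p = (1 - t) powr p * x powr p"
      using t xy by (simp add: powr_mult)
    also have "\<dots> \<le> (1 - t) * x powr p" using powr_le_self[of "1 - t"] t by (intro mult_right_mono) auto
    finally show ?thesis using 2 p by simp
  next
    case 3
    then show ?thesis using convex_onD[OF powr_convex[OF p], of t x y] t by simp
  qed
qed simp

definition lpsum :: "real \<Rightarrow> real ^ 'n \<Rightarrow> real" where
  "lpsum p \<theta> = (\<Sum>j\<in>UNIV. \<bar>\<theta> $ j\<bar> powr p)"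

lemma lpsum_nonneg: "lpsum p \<theta> \<ge> 0"
  unfolding lpsum_def by (intro sum_nonneg) auto

lemma lpnorm_eq_lpsum_powr: "lpnorm p \<theta> = lpsum p \<theta> powr (1 / p)"
  unfolding lpnorm_def lpsum_def ..

lemma lpsum_eq_lpnorm_powr:
  assumes "p > 0"
  shows "lpsum p \<theta> = lpnorm p \<theta> powr p"
  using assms lpsum_nonneg[of p \<theta>] by (simp add: lpnorm_eq_lpsum_powr powr_powr)

lemma lpnorm_nonneg: "lpnorm p \<theta> \<ge> 0"
  by (simp add: lpnorm_eq_lpsum_powr)

lemma lpsum_scaleR:
  assumes "c \<ge> 0"
  shows "lpsum p (c *\<^sub>R \<theta>) = c powr p * lpsum p \<theta>"
  unfolding lpsum_def using assms by (simp add: abs_mult powr_mult sum_distrib_left)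

lemma lpnorm_scaleR:
  assumes c: "c \<ge> 0" and p: "p > 0"
  shows "lpnorm p (c *\<^sub>R \<theta>) = c * lpnorm p \<theta>"
  using c p lpsum_nonneg[of p \<theta>]
  by (simp add: lpnorm_eq_lpsum_powr lpsum_scaleR powr_mult powr_powr)

lemma lpnorm_eq_0_iff:
  assumes "p > 0"
  shows "lpnorm p \<theta> = 0 \<longleftrightarrow> \<theta> = 0"
proof
  assume "lpnorm p \<theta> = 0"
  then have "lpsum p \<theta> = 0" using assms by (simp add: lpsum_eq_lpnorm_powr)
  then have "\<forall>j\<in>UNIV. \<bar>\<theta> $ j\<bar> powr p = 0"
    unfolding lpsum_def by (subst sum_nonneg_eq_0_iff[symmetric]) auto
  then show "\<theta> = 0" by (simp add: vec_eq_iff)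
qed (simp add: lpnorm_def)

lemma convex_on_lpsum:
  assumes p: "p \<ge> 1"
  shows "convex_on UNIV (lpsum p)"
proof (rule convex_onI)
  fix t :: real and a b :: "real ^ 'n"
  assume t: "0 < t" "t < 1"
  have "\<bar>(1 - t) * a $ j + t * b $ j\<bar> powr p \<le> ((1 - t) * \<bar>a $ j\<bar> + t * \<bar>b $ j\<bar>) powr p" for j
    using t p abs_triangle_ineq[of "(1 - t) * a $ j" "t * b $ j"]
    by (intro powr_mono2) (auto simp: abs_mult)
  also have "((1 - t) * \<bar>a $ j\<bar> + t * \<bar>b $ j\<bar>) powr p
      \<le> (1 - t) * \<bar>a $ j\<bar> powr p + t * \<bar>b $ j\<bar> powr p" for j
    using convex_onD[OF convex_on_powr_nonneg[OF p], of t "\<bar>a $ j\<bar>" "\<bar>b $ j\<bar>"] t by simp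
  finally show "lpsum p ((1 - t) *\<^sub>R a + t *\<^sub>R b) \<le> (1 - t) * lpsum p a + t * lpsum p b"
    unfolding lpsum_def by (simp add: sum_distrib_left sum.distrib[symmetric] sum_mono)
qed simp

lemma lpnorm_triangle:
  assumes p: "p \<ge> 1"
  shows "lpnorm p (a + b) \<le> lpnorm p a + lpnorm p b"
proof (cases "a = 0 \<or> b = 0")
  case True
  then show ?thesis by (auto simp: lpnorm_nonneg)
next
  case False
  define A B where "A = lpnorm p a" and "B = lpnorm p b"
  have A: "A > 0" and B: "B > 0"
    using False p lpnorm_nonneg[of p] lpnorm_eq_0_iff[of p] unfolding A_def B_def
    by (metis less_eq_real_def less_le_trans zero_less_one)+
  have unit_sphere: "lpsum p ((1 / lpnorm p v) *\<^sub>R v) = 1" if "lpnorm p v > 0" for v :: "real ^ 'n"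
    using that p by (simp add: lpsum_eq_lpnorm_powr lpnorm_scaleR)
  \<comment> \<open>Convexity of the unit ball, with weights proportional to the norms.\<close>
  have combination: "(1 - B / (A + B)) *\<^sub>R ((1 / A) *\<^sub>R a) + (B / (A + B)) *\<^sub>R ((1 / B) *\<^sub>R b)
      = (1 / (A + B)) *\<^sub>R (a + b)"
    using A B by (simp add: field_simps scaleR_add_right)
  have "lpsum p ((1 / (A + B)) *\<^sub>R (a + b))
      \<le> (1 - B / (A + B)) * lpsum p ((1 / A) *\<^sub>R a) + (B / (A + B)) * lpsum p ((1 / B) *\<^sub>R b)"
    unfolding combination[symmetric] using A B by (intro convex_onD[OF convex_on_lpsum[OF p]]) auto
  also have "\<dots> = 1"
    using unit_sphere[of a] unit_sphere[of b] A B by (simp add: A_def B_def)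
  finally have "lpsum p ((1 / (A + B)) *\<^sub>R (a + b)) \<le> 1" .
  then have "lpnorm p ((1 / (A + B)) *\<^sub>R (a + b)) \<le> 1"
    unfolding lpnorm_eq_lpsum_powr using p lpsum_nonneg[of p "(1 / (A + B)) *\<^sub>R (a + b)"]
    by (intro powr_le1) auto
  then have "(1 / (A + B)) * lpnorm p (a + b) \<le> 1" using A B p by (simp add: lpnorm_scaleR)
  then show ?thesis using A B by (simp add: A_def B_def field_simps)
qed

lemma convex_on_lpnorm:
  assumes p: "p \<ge> 1"
  shows "convex_on UNIV (lpnorm p)"
proof (rule convex_onI)
  fix t :: real and a b :: "real ^ 'n"
  assume "0 < t" "t < 1"
  then show "lpnorm p ((1 - t) *\<^sub>R a + t *\<^sub>R b) \<le> (1 - t) * lpnorm p a + t * lpnorm p b"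
    using lpnorm_triangle[OF p, of "(1 - t) *\<^sub>R a" "t *\<^sub>R b"] p by (simp add: lpnorm_scaleR)
qed simp

lemma convex_on_power2_nonneg:
  fixes N :: "'a::real_vector \<Rightarrow> real"
  assumes cvx: "convex_on S N" and nonneg: "\<And>x. x \<in> S \<Longrightarrow> N x \<ge> 0"
  shows "convex_on S (\<lambda>x. (N x)\<^sup>2)"
proof (rule convex_onI)
  fix t :: real and x y assume t: "0 < t" "t < 1" and xy: "x \<in> S" "y \<in> S"
  then have "(1 - t) *\<^sub>R x + t *\<^sub>R y \<in> S"
    using convex_on_imp_convex[OF cvx] by (simp add: convex_alt)
  then have "(N ((1 - t) *\<^sub>R x + t *\<^sub>R y))\<^sup>2 \<le> ((1 - t) * N x + t * N y)\<^sup>2"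
    using convex_onD[OF cvx, of t x y] t xy nonneg by (intro power_mono) auto
  also have "\<dots> \<le> (1 - t) * (N x)\<^sup>2 + t * (N y)\<^sup>2"
    using convex_onD[OF convex_power2, of t "N x" "N y"] t by simp
  finally show "(N ((1 - t) *\<^sub>R x + t *\<^sub>R y))\<^sup>2 \<le> (1 - t) * (N x)\<^sup>2 + t * (N y)\<^sup>2" .
qed (rule convex_on_imp_convex[OF cvx])

lemma l1norm_eq_lpnorm_1: "l1norm = lpnorm 1"
  by (auto simp: fun_eq_iff l1norm_def lpnorm_def sum_nonneg)

lemma linear_kkt_sufficient:
  fixes F :: "'a::real_inner \<Rightarrow> real"
  assumes subgrad: "F u + g \<bullet> (z - u) \<le> F z"
    and g: "g = (\<Sum>i<K. lam i *\<^sub>R a i)"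
    and lam: "\<And>i. i < K \<Longrightarrow> lam i \<ge> 0"
    and slack: "\<And>i. i < K \<Longrightarrow> lam i * (a i \<bullet> u - b) = 0"
    and feasible: "\<And>i. i < K \<Longrightarrow> a i \<bullet> z \<ge> b"
  shows "F u \<le> F z"
proof -
  have "lam i * (a i \<bullet> (z - u)) = lam i * (a i \<bullet> z - b) - lam i * (a i \<bullet> u - b)" for i
    by (simp add: inner_diff_right algebra_simps)
  then have "g \<bullet> (z - u) = (\<Sum>i<K. lam i * (a i \<bullet> z - b))"
    unfolding g by (simp add: inner_sum_left slack)
  also have "\<dots> \<ge> 0" using lam feasible by (intro sum_nonneg) simp
  finally show ?thesis using subgrad by linarith
qed

lemma kkt_point_linearized:
  fixes f :: "real ^ 'n \<Rightarrow> 'x \<Rightarrow> real"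
  assumes L: "L > 0"
    and lip: "\<And>z. locally_lipschitz (\<lambda>\<theta>. f \<theta> z)"
    and hom: "\<And>c \<theta> z. c > 0 \<Longrightarrow> f (c *\<^sub>R \<theta>) z = c powr L * f \<theta> z"
    and kkt: "kkt_point \<phi> f K x y \<theta>s"
  obtains h lam g where
    "\<And>i. i < K \<Longrightarrow> h i \<in> clarke_subdiff (\<lambda>\<theta>. f \<theta> (x i)) \<theta>s"
    "\<And>i. i < K \<Longrightarrow> lam i \<ge> 0"
    "g \<in> clarke_subdiff (\<lambda>t. (1/2) * (\<phi> t)\<^sup>2) \<theta>s"
    "g = (\<Sum>i<K. lam i *\<^sub>R (y i *\<^sub>R h i))"
    "\<And>i. i < K \<Longrightarrow> (y i *\<^sub>R h i) \<bullet> \<theta>s \<ge> L"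
    "\<And>i. i < K \<Longrightarrow> lam i * ((y i *\<^sub>R h i) \<bullet> \<theta>s - L) = 0"
proof -
  from kkt obtain lam h' g where feasible: "\<forall>i<K. y i * f \<theta>s (x i) \<ge> 1"
    and lam: "\<forall>i<K. lam i \<ge> 0"
    and h': "\<forall>i<K. h' i \<in> clarke_subdiff (\<lambda>t. y i * f t (x i)) \<theta>s"
    and g: "g \<in> clarke_subdiff (\<lambda>t. (1/2) * (\<phi> t)\<^sup>2) \<theta>s" and g_eq: "g = (\<Sum>i<K. lam i *\<^sub>R h' i)"
    and slack: "\<forall>i<K. lam i * (y i * f \<theta>s (x i) - 1) = 0"
    unfolding kkt_point_def by (auto simp: image_iff)
  have "\<forall>i<K. \<exists>w \<in> clarke_subdiff (\<lambda>\<theta>. f \<theta> (x i)) \<theta>s. h' i = y i *\<^sub>R w"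
  proof (intro allI impI)
    fix i assume "i < K"
    then have y_nonzero: "y i \<noteq> 0" using feasible by force
    show "\<exists>w \<in> clarke_subdiff (\<lambda>\<theta>. f \<theta> (x i)) \<theta>s. h' i = y i *\<^sub>R w"
      using clarke_subdiff_cmult_subset[OF y_nonzero, of "\<lambda>\<theta>. f \<theta> (x i)" \<theta>s] h' \<open>i < K\<close> by blast
  qed
  then obtain h where h: "\<forall>i<K. h i \<in> clarke_subdiff (\<lambda>\<theta>. f \<theta> (x i)) \<theta>s"
    and h'_eq: "\<forall>i<K. h' i = y i *\<^sub>R h i"
    by metis
  have euler: "(y i *\<^sub>R h i) \<bullet> \<theta>s = L * (y i * f \<theta>s (x i))" if "i < K" for i
    unfolding h'_eq[rule_format, OF that, symmetric] using h' that
    by (intro clarke_subdiff_homogeneous_euler[where g = "\<lambda>t. y i * f t (x i)"])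
       (auto simp: hom intro!: continuous_intros locally_lipschitz_imp_isCont[OF lip])
  show thesis
  proof (rule that)
    show "g = (\<Sum>i<K. lam i *\<^sub>R (y i *\<^sub>R h i))"
      unfolding g_eq using h'_eq by (intro sum.cong) auto
    fix i assume i: "i < K"
    show "(y i *\<^sub>R h i) \<bullet> \<theta>s \<ge> L"
      unfolding euler[OF i] using feasible i L by (simp add: mult_le_cancel_left1)
    have "lam i * (L * (y i * f \<theta>s (x i)) - L) = L * (lam i * (y i * f \<theta>s (x i) - 1))"
      by (simp add: algebra_simps)
    then show "lam i * ((y i *\<^sub>R h i) \<bullet> \<theta>s - L) = 0"
      unfolding euler[OF i] using slack i by simp
  qed (use h lam g in auto)
qed

lemma kkt_rescaled_optimal:
  fixes F :: "real ^ 'n \<Rightarrow> real"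
  assumes F_convex: "convex_on UNIV F"
    and F_scale: "\<And>a \<theta>. a > 0 \<Longrightarrow> F (a *\<^sub>R \<theta>) = a\<^sup>2 * F \<theta>"
    and L: "L > 0"
    and g: "g \<in> clarke_subdiff F \<theta>s" and g_eq: "g = (\<Sum>i<K. lam i *\<^sub>R a i)"
    and lam: "\<And>i. i < K \<Longrightarrow> lam i \<ge> 0"
    and slack: "\<And>i. i < K \<Longrightarrow> lam i * (a i \<bullet> \<theta>s - L) = 0"
    and feasible: "\<And>i. i < K \<Longrightarrow> a i \<bullet> \<theta> \<ge> 1"
  shows "F ((1 / L) *\<^sub>R \<theta>s) \<le> F \<theta>"
proof -
  have "F \<theta>s \<le> F (L *\<^sub>R \<theta>)"
  proof (rule linear_kkt_sufficient[OF convex_on_clarke_subgradient[OF F_convex g, of "L *\<^sub>R \<theta>"] g_eq lam slack])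
    fix i assume "i < K"
    then show "a i \<bullet> (L *\<^sub>R \<theta>) \<ge> L" using feasible L by simp
  qed
  then have "L\<^sup>2 * F ((1 / L) *\<^sub>R \<theta>s) \<le> L\<^sup>2 * F \<theta>"
    using F_scale[OF L, of "(1 / L) *\<^sub>R \<theta>s"] F_scale[OF L, of \<theta>] L by simp
  then show ?thesis using L by simp
qed

theorem lemmaH2:
  fixes f :: "real ^ 'n \<Rightarrow> 'x \<Rightarrow> real" and L :: real and K :: nat
    and x :: "nat \<Rightarrow> 'x" and y :: "nat \<Rightarrow> real"
    and \<phi> :: "real ^ 'n \<Rightarrow> real" and \<theta>s :: "real ^ 'n"
  assumes L_pos: "L > 0"
    and lip: "\<And>z. locally_lipschitz (\<lambda>\<theta>. f \<theta> z)"
    and hom: "\<And>c \<theta> z. c > 0 \<Longrightarrow> f (c *\<^sub>R \<theta>) z = c powr L * f \<theta> z"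
    and phi: "\<phi> = l1norm \<or> (\<exists>p\<ge>2. \<phi> = (\<lambda>\<theta>. (p - 1) powr (1 / p) * lpnorm p \<theta>))"
    and kkt: "kkt_point \<phi> f K x y \<theta>s"
  shows "\<exists>h. (\<forall>i<K. h i \<in> clarke_subdiff (\<lambda>\<theta>. f \<theta> (x i)) \<theta>s) \<and>
             (\<forall>i<K. y i * (((1 / L) *\<^sub>R \<theta>s) \<bullet> h i) \<ge> 1) \<and>
             (\<forall>\<theta>. (\<forall>i<K. y i * (\<theta> \<bullet> h i) \<ge> 1) \<longrightarrow>
                  (1/2) * (\<phi> ((1 / L) *\<^sub>R \<theta>s))\<^sup>2 \<le> (1/2) * (\<phi> \<theta>)\<^sup>2)"
proof -
  obtain c p where c: "c \<ge> 0" and p: "p \<ge> 1" and \<phi>_eq: "\<phi> = (\<lambda>\<theta>. c * lpnorm p \<theta>)"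
    using phi
  proof (elim disjE exE conjE)
    assume "\<phi> = l1norm"
    then show thesis by (intro that[of 1 1]) (auto simp: l1norm_eq_lpnorm_1)
  next
    fix q assume "q \<ge> 2" "\<phi> = (\<lambda>\<theta>. (q - 1) powr (1 / q) * lpnorm q \<theta>)"
    then show thesis by (intro that[of "(q - 1) powr (1 / q)" q]) auto
  qed
  define F where "F = (\<lambda>\<theta>. (1/2) * (\<phi> \<theta>)\<^sup>2)"
  have F_convex: "convex_on UNIV F"
    unfolding F_def \<phi>_eq using c p
    by (intro convex_on_cmul convex_on_power2_nonneg convex_on_lpnorm mult_nonneg_nonneg lpnorm_nonneg) auto
  have F_scale: "F (a *\<^sub>R \<theta>) = a\<^sup>2 * F \<theta>" if "a > 0" for a \<theta>
    unfolding F_def \<phi>_eq using that p by (simp add: lpnorm_scaleR power_mult_distrib)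
  obtain h lam g where h: "\<And>i. i < K \<Longrightarrow> h i \<in> clarke_subdiff (\<lambda>\<theta>. f \<theta> (x i)) \<theta>s"
    and lam: "\<And>i. i < K \<Longrightarrow> lam i \<ge> 0"
    and g: "g \<in> clarke_subdiff F \<theta>s" and g_eq: "g = (\<Sum>i<K. lam i *\<^sub>R (y i *\<^sub>R h i))"
    and feasible: "\<And>i. i < K \<Longrightarrow> (y i *\<^sub>R h i) \<bullet> \<theta>s \<ge> L"
    and slack: "\<And>i. i < K \<Longrightarrow> lam i * ((y i *\<^sub>R h i) \<bullet> \<theta>s - L) = 0"
    using kkt_point_linearized[OF L_pos lip hom kkt] unfolding F_def[symmetric] by blast
  have "y i * (((1 / L) *\<^sub>R \<theta>s) \<bullet> h i) \<ge> 1" if "i < K" for i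
    using feasible[OF that] L_pos by (simp add: inner_commute field_simps)
  moreover have "F ((1 / L) *\<^sub>R \<theta>s) \<le> F \<theta>" if "\<forall>i<K. y i * (\<theta> \<bullet> h i) \<ge> 1" for \<theta>
    using that
    by (intro kkt_rescaled_optimal[OF F_convex F_scale L_pos g g_eq lam slack]) (simp_all add: inner_commute)
  ultimately show ?thesis
    using h unfolding F_def by blast
qed

end
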